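(* Let $k\in\mathbb N$, $0<p,q\le\infty$, $\alpha\in\mathbb R$, $\beta\in J_p$, $\delta>0$, and $0<\varepsilon\le\min\{2k^2\delta^2,1\}$. Then the function $f(x)=\lambda(x-1+\varepsilon)_+^{k-1}$ with $\lambda=\varepsilon^{-k-\beta-1/p+1}$ satisfies $f\in\mathbb M^k$, $\|w_{\alpha,\beta}f\|_p\sim1$, and \[ \omega_\varphi^k(f,\delta)_{w_{\alpha,\beta},q}\ge c\,\varepsilon^{1/q-1/p}, \] with constants independent of $\varepsilon$ and $\delta$.
   Context: For $x\in[-1,1]$, $\varphi(x)=\sqrt{1-x^2}$, $w_{\alpha,\beta}(x)=(1+x)^\alpha(1-x)^\beta$; $\|\cdot\|_p$ is the $L_p[-1,1]$ (quasi)norm, $\|g\|_{L_q(S)}$ over $S$; $J_p=(-1/p,\infty)$ if $p<\infty$, $J_\infty=[0,\infty)$; $u_+=\max\{u,0\}$ (with $u_+^0$ the indicator of $u>0$... i.e. of $u\ge0$ up to a point). $\Delta_h^k(f,x)=\sum_{i=0}^k\binom ki(-1)^{k-i}f(x-kh/2+ih)$ if $x\pm kh/2\in[-1,1]$, else $0$; $\overrightarrow\Delta_h^k(f,x)=\Delta_h^k(f,x+kh/2)$, $\overleftarrow\Delta_h^k(f,x)=\Delta_h^k(f,x-kh/2)$. For a weight $w$: $\Omega_\varphi^k(f,\delta)_{w,q}=\sup_{0<h\le\delta}\|w(x)\Delta^k_{h\varphi(x)}(f,x)\|_{L_q[-1+2k^2h^2,1-2k^2h^2]}$, $\overrightarrow\Omega_\varphi^k(f,\delta)_{w,q}=\sup_{0<h\le2k^2\delta^2}\|w\overrightarrow\Delta_h^k(f,\cdot)\|_{L_q[-1,-1+2k^2\delta^2]}$,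 $\overleftarrow\Omega_\varphi^k(f,\delta)_{w,q}=\sup_{0<h\le2k^2\delta^2}\|w\overleftarrow\Delta_h^k(f,\cdot)\|_{L_q[1-2k^2\delta^2,1]}$, $\omega_\varphi^k=\Omega_\varphi^k+\overrightarrow\Omega_\varphi^k+\overleftarrow\Omega_\varphi^k$. $\mathbb M^k$: functions on $(-1,1)$ with all $k$th divided differences at distinct points nonnegative. $F\sim G$ means two-sided bounds with positive constants independent of $\varepsilon,\delta$. *)

theory Defs
  imports "HOL-Analysis.Analysis" "HOL-Probability.Essential_Supremum"
begin

definition inv_exp :: "ereal \<Rightarrow> real" where
  "inv_exp p = (if p = \<infinity> then 0 else 1 / real_of_ereal p)"

definition Lnorm :: "ereal \<Rightarrow> real set \<Rightarrow> (real \<Rightarrow> real) \<Rightarrow> ereal" where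
  "Lnorm q S g =
     (if q = \<infinity> then max 0 (esssup (lebesgue_on S) (\<lambda>x. ereal \<bar>g x\<bar>))
      else (let I = (\<integral>\<^sup>+ x. ennreal (\<bar>g x\<bar> powr real_of_ereal q) \<partial>(lebesgue_on S))
            in if I = \<infinity> then \<infinity> else ereal (enn2real I powr (1 / real_of_ereal q))))"

definition phi :: "real \<Rightarrow> real" where
  "phi x = sqrt (1 - x\<^sup>2)"

definition wab :: "real \<Rightarrow> real \<Rightarrow> real \<Rightarrow> real" where
  "wab \<alpha> \<beta> x = (1 + x) powr \<alpha> * (1 - x) powr \<beta>"

text \<open>u_+^n; for n = 0 this is the indicator of u > 0.\<close>
definition pos_pow :: "real \<Rightarrow> nat \<Rightarrow> real" where
  "pos_pow u n = (if u > 0 then u ^ n else 0)"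

definition Delta :: "nat \<Rightarrow> real \<Rightarrow> (real \<Rightarrow> real) \<Rightarrow> real \<Rightarrow> real" where
  "Delta k h f x =
     (if x - k * h / 2 \<in> {-1..1} \<and> x + k * h / 2 \<in> {-1..1}
      then (\<Sum>i\<le>k. real (k choose i) * (-1) ^ (k - i) * f (x - k * h / 2 + i * h))
      else 0)"

definition Delta_fwd :: "nat \<Rightarrow> real \<Rightarrow> (real \<Rightarrow> real) \<Rightarrow> real \<Rightarrow> real" where
  "Delta_fwd k h f x = Delta k h f (x + k * h / 2)"

definition Delta_bwd :: "nat \<Rightarrow> real \<Rightarrow> (real \<Rightarrow> real) \<Rightarrow> real \<Rightarrow> real" where
  "Delta_bwd k h f x = Delta k h f (x - k * h / 2)"

definition Omega_main :: "nat \<Rightarrow> (real \<Rightarrow> real) \<Rightarrow> real \<Rightarrow> (real \<Rightarrow> real) \<Rightarrow> ereal \<Rightarrow> ereal" where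
  "Omega_main k f \<delta> w q =
     (SUP h\<in>{0<..\<delta>}. Lnorm q {-1 + 2 * k\<^sup>2 * h\<^sup>2 .. 1 - 2 * k\<^sup>2 * h\<^sup>2}
        (\<lambda>x. w x * Delta k (h * phi x) f x))"

definition Omega_left :: "nat \<Rightarrow> (real \<Rightarrow> real) \<Rightarrow> real \<Rightarrow> (real \<Rightarrow> real) \<Rightarrow> ereal \<Rightarrow> ereal" where
  "Omega_left k f \<delta> w q =
     (SUP h\<in>{0<..2 * k\<^sup>2 * \<delta>\<^sup>2}. Lnorm q {-1 .. -1 + 2 * k\<^sup>2 * \<delta>\<^sup>2}
        (\<lambda>x. w x * Delta_fwd k h f x))"

definition Omega_right :: "nat \<Rightarrow> (real \<Rightarrow> real) \<Rightarrow> real \<Rightarrow> (real \<Rightarrow> real) \<Rightarrow> ereal \<Rightarrow> ereal" where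
  "Omega_right k f \<delta> w q =
     (SUP h\<in>{0<..2 * k\<^sup>2 * \<delta>\<^sup>2}. Lnorm q {1 - 2 * k\<^sup>2 * \<delta>\<^sup>2 .. 1}
        (\<lambda>x. w x * Delta_bwd k h f x))"

definition omega_phi :: "nat \<Rightarrow> (real \<Rightarrow> real) \<Rightarrow> real \<Rightarrow> (real \<Rightarrow> real) \<Rightarrow> ereal \<Rightarrow> ereal" where
  "omega_phi k f \<delta> w q = Omega_main k f \<delta> w q + Omega_left k f \<delta> w q + Omega_right k f \<delta> w q"

text \<open>k-th divided difference of f at the points xs 0, ..., xs k (assumed distinct).\<close>
definition divdiff :: "nat \<Rightarrow> (nat \<Rightarrow> real) \<Rightarrow> (real \<Rightarrow> real) \<Rightarrow> real" where
  "divdiff k xs f = (\<Sum>i\<le>k. f (xs i) / (\<Prod>j\<in>{..k} - {i}. (xs i - xs j)))"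

definition Mk :: "nat \<Rightarrow> (real \<Rightarrow> real) set" where
  "Mk k = {f. \<forall>xs. inj_on xs {..k} \<and> (\<forall>i\<le>k. xs i \<in> {-1<..<1}) \<longrightarrow> divdiff k xs f \<ge> 0}"

definition J :: "ereal \<Rightarrow> real set" where
  "J p = (if p = \<infinity> then {0..} else {- inv_exp p <..})"

end

theory Submission
  imports Defs
begin

text \<open>The function is a truncated power with knot \<open>1 - \<epsilon>\<close>, so its \<open>k\<close>-th divided differences
  are nonnegative. On its support \<open>(1 - \<epsilon>, 1]\<close> the substitution \<open>x = 1 - \<epsilon> s\<close> turns
  \<open>w f\<close> into \<open>\<epsilon>^(-1/p)\<close> times the fixed profile \<open>(2 - \<epsilon> s)^\<alpha> s^\<beta> (1 - s)^(k-1)\<close>, which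
  gives \<open>\<parallel>w f\<parallel>\<^sub>p \<sim> 1\<close>; the upper bound needs \<open>\<beta> > -1/p\<close> to integrate \<open>s^(\<beta> p)\<close>.
  For the modulus take the backward difference with step \<open>h = \<epsilon>/(2k)\<close>: at points
  \<open>x \<in> [1 - \<epsilon> + h/2, 1 - \<epsilon> + h]\<close> every node except \<open>x\<close> lies left of the knot, so the
  difference equals \<open>f x\<close>, which is of size \<open>\<epsilon>^(-1/p)\<close> on a set of length \<open>\<epsilon>/(4k)\<close>;
  hence the lower bound \<open>c \<epsilon>^(1/q - 1/p)\<close>.\<close>

lemma Min_less_Max:
  fixes S :: "'a::linorder set"
  assumes "finite S" "2 \<le> card S"
  shows "Min S < Max S"
proof (rule ccontr)
  assume "\<not> Min S < Max S"
  have "x = Min S" if "x \<in> S" for x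
    using that assms Min_le[of S x] Max_ge[of S x] \<open>\<not> Min S < Max S\<close>
    by (metis order.antisym not_less order.trans)
  then have "S \<subseteq> {Min S}" by blast
  then have "card S \<le> 1" using card_mono[of "{Min S}" S] by auto
  with assms(2) show False by simp
qed

lemma card_2_ordered:
  fixes S :: "'a::linorder set"
  assumes "card S = 2"
  obtains u v where "S = {u, v}" "u < v"
proof -
  obtain x y where "S = {x, y}" "x \<noteq> y" using assms by (auto simp: card_2_iff)
  then show thesis
    using that[of x y] that[of y x] by (cases "x < y") (auto simp: insert_commute)
qed

lemma
  assumes "finite S" "2 \<le> card S"
  shows Min_in_card_ge2: "Min S \<in> S" and Max_in_card_ge2: "Max S \<in> S"
    and card_Diff_Min: "card (S - {Min S}) = card S - 1"
    and card_Diff_Max: "card (S - {Max S}) = card S - 1"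
proof -
  have "S \<noteq> {}" using assms by auto
  then show "Min S \<in> S" "Max S \<in> S" using assms(1) by simp_all
  then show "card (S - {Min S}) = card S - 1" "card (S - {Max S}) = card S - 1"
    using assms(1) by (simp_all add: card_Diff_singleton)
qed

definition divdiff_on :: "real set \<Rightarrow> (real \<Rightarrow> real) \<Rightarrow> real" where
  "divdiff_on S g = (\<Sum>x\<in>S. g x / (\<Prod>y\<in>S - {x}. x - y))"

lemma divdiff_on_cong: "(\<And>x. x \<in> S \<Longrightarrow> g x = h x) \<Longrightarrow> divdiff_on S g = divdiff_on S h"
  unfolding divdiff_on_def by (auto intro!: sum.cong)

lemma divdiff_on_cmult: "divdiff_on S (\<lambda>x. a * g x) = a * divdiff_on S g"
  unfolding divdiff_on_def by (simp add: sum_distrib_left)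

lemma divdiff_on_singleton: "divdiff_on {u} g = g u"
  by (simp add: divdiff_on_def)

lemma divdiff_on_mult_linear:
  assumes "finite S" "u \<in> S"
  shows "divdiff_on S (\<lambda>x. (x - c) * g x) = (u - c) * divdiff_on S g + divdiff_on (S - {u}) g"
proof -
  let ?P = "\<lambda>x. \<Prod>y\<in>S - {x}. x - y"
  have "divdiff_on S (\<lambda>x. (x - c) * g x) = (\<Sum>x\<in>S. (u - c) * (g x / ?P x) + (x - u) * g x / ?P x)"
    unfolding divdiff_on_def
    by (intro sum.cong refl) (simp add: add_divide_distrib[symmetric] algebra_simps)
  also have "\<dots> = (u - c) * divdiff_on S g + (\<Sum>x\<in>S. (x - u) * g x / ?P x)"
    by (simp add: divdiff_on_def sum.distrib sum_distrib_left)
  also have "(\<Sum>x\<in>S. (x - u) * g x / ?P x) = (\<Sum>x\<in>S - {u}. (x - u) * g x / ?P x)"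
    using assms by (simp add: sum.remove)
  also have "(\<Sum>x\<in>S - {u}. (x - u) * g x / ?P x) = divdiff_on (S - {u}) g"
    unfolding divdiff_on_def
  proof (intro sum.cong refl)
    fix x assume x: "x \<in> S - {u}"
    have "?P x = (x - u) * (\<Prod>y\<in>S - {x} - {u}. x - y)"
      using assms x by (subst prod.remove[of _ u]) auto
    also have "S - {x} - {u} = S - {u} - {x}" by blast
    finally have "?P x = (x - u) * (\<Prod>y\<in>S - {u} - {x}. x - y)" .
    with x show "(x - u) * g x / ?P x = g x / (\<Prod>y\<in>S - {u} - {x}. x - y)"
      by simp
  qed
  finally show ?thesis .
qed

lemma divdiff_on_recurrence:
  assumes "finite S" "u \<in> S" "v \<in> S" "u \<noteq> v"
  shows "divdiff_on S g = (divdiff_on (S - {u}) g - divdiff_on (S - {v}) g) / (v - u)"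
  using divdiff_on_mult_linear[OF assms(1,2), of v g] divdiff_on_mult_linear[OF assms(1,3), of v g] assms(4)
  by (simp add: field_simps)

lemma divdiff_on_pair: "u \<noteq> v \<Longrightarrow> divdiff_on {u, v} g = (g v - g u) / (v - u)"
  using divdiff_on_recurrence[of "{u, v}" u v g]
  by (simp add: insert_Diff_if divdiff_on_singleton)

lemma divdiff_on_const: "finite S \<Longrightarrow> card S = n + 2 \<Longrightarrow> divdiff_on S (\<lambda>_. c) = 0"
proof (induction n arbitrary: S)
  case 0
  then have "card S = 2" by simp
  then obtain u v where "S = {u, v}" "u < v" by (rule card_2_ordered)
  then show ?case by (simp add: divdiff_on_pair)
next
  case (Suc n)
  let ?u = "Min S" and ?v = "Max S"
  have "card (S - {?u}) = n + 2" "card (S - {?v}) = n + 2"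
    using Suc.prems by (simp_all add: card_Diff_Min card_Diff_Max)
  then have "divdiff_on (S - {?u}) (\<lambda>_. c) = 0" "divdiff_on (S - {?v}) (\<lambda>_. c) = 0"
    using Suc by simp_all
  then show ?case
    using Suc.prems Min_less_Max[of S] Min_in_card_ge2[of S] Max_in_card_ge2[of S]
    by (simp add: divdiff_on_recurrence[of S ?u ?v])
qed

lemma divdiff_on_power: "finite S \<Longrightarrow> n + 2 \<le> card S \<Longrightarrow> divdiff_on S (\<lambda>x. (x - c) ^ n) = 0"
proof (induction n arbitrary: S)
  case 0
  then show ?case using divdiff_on_const[of S "card S - 2" 1] by simp
next
  case (Suc n)
  have "Min S \<in> S" "card (S - {Min S}) \<ge> n + 2"
    using Suc.prems by (simp_all add: Min_in_card_ge2 card_Diff_Min)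
  then show ?case
    using Suc divdiff_on_mult_linear[of S "Min S" c "\<lambda>x. (x - c) ^ n"] by simp
qed

lemma pos_pow_Suc: "pos_pow u (Suc n) = u * pos_pow u n"
  by (simp add: pos_pow_def)

text \<open>Writing \<open>(x - c)\<^sub>+^(n+1) = (x - c) (x - c)\<^sub>+^n\<close>, the Leibniz rule and the recurrence
  express the divided difference on \<open>S\<close> as a combination of those on \<open>S\<close> without its least
  node \<open>u\<close> and without its largest node \<open>v\<close>, with weights \<open>(v - c)/(v - u)\<close> and \<open>(c - u)/(v - u)\<close>.
  These are nonnegative when \<open>u \<le> c < v\<close>; otherwise the function is a polynomial or zero on \<open>S\<close>.\<close>
lemma divdiff_on_pos_pow_nonneg:
  "finite S \<Longrightarrow> card S = n + 2 \<Longrightarrow> 0 \<le> divdiff_on S (\<lambda>x. pos_pow (x - c) n)"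
proof (induction n arbitrary: S)
  case 0
  then have "card S = 2" by simp
  then obtain u v where "S = {u, v}" "u < v" by (rule card_2_ordered)
  then show ?case by (simp add: divdiff_on_pair pos_pow_def)
next
  case (Suc n)
  let ?u = "Min S" and ?v = "Max S" and ?g = "\<lambda>x. pos_pow (x - c) n"
  have uv: "?u \<in> S" "?v \<in> S" "?u < ?v"
    using Suc.prems by (simp_all add: Min_in_card_ge2 Max_in_card_ge2 Min_less_Max)
  have between: "?u \<le> x" "x \<le> ?v" if "x \<in> S" for x
    using Suc.prems(1) that by simp_all
  consider "c < ?u" | "?v \<le> c" | "?u \<le> c" "c < ?v" by linarith
  then show ?case
  proof cases
    case 1
    then have "divdiff_on S (\<lambda>x. pos_pow (x - c) (Suc n)) = divdiff_on S (\<lambda>x. (x - c) ^ Suc n)"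
      using between by (intro divdiff_on_cong) (force simp: pos_pow_def)
    then show ?thesis using Suc.prems divdiff_on_power[of S "Suc n" c] by simp
  next
    case 2
    then have "divdiff_on S (\<lambda>x. pos_pow (x - c) (Suc n)) = divdiff_on S (\<lambda>_. 0)"
      using between by (intro divdiff_on_cong) (force simp: pos_pow_def)
    then show ?thesis by (simp add: divdiff_on_def)
  next
    case 3
    have "card (S - {?u}) = n + 2" "card (S - {?v}) = n + 2"
      using Suc.prems by (simp_all add: card_Diff_Min card_Diff_Max)
    then have A: "0 \<le> divdiff_on (S - {?u}) ?g" and B: "0 \<le> divdiff_on (S - {?v}) ?g"
      using Suc by simp_all
    have "divdiff_on S (\<lambda>x. pos_pow (x - c) (Suc n))
        = (?u - c) * divdiff_on S ?g + divdiff_on (S - {?u}) ?g"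
      unfolding pos_pow_Suc by (rule divdiff_on_mult_linear[OF Suc.prems(1) uv(1)])
    also have "\<dots> = ((?v - c) * divdiff_on (S - {?u}) ?g + (c - ?u) * divdiff_on (S - {?v}) ?g) / (?v - ?u)"
      using uv Suc.prems(1) by (simp add: divdiff_on_recurrence[of S ?u ?v] field_simps)
    also have "\<dots> \<ge> 0"
      using A B 3 uv by (intro divide_nonneg_pos add_nonneg_nonneg mult_nonneg_nonneg) auto
    finally show ?thesis .
  qed
qed

lemma divdiff_eq_divdiff_on:
  assumes "inj_on xs {..k}"
  shows "divdiff k xs f = divdiff_on (xs ` {..k}) f"
proof -
  have "xs ` {..k} - {xs i} = xs ` ({..k} - {i})" if "i \<le> k" for i
    using inj_on_image_set_diff[OF assms, of "{..k}" "{i}"] that by simp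
  moreover have "inj_on xs ({..k} - {i})" for i
    using assms by (rule inj_on_subset) auto
  ultimately show ?thesis
    unfolding divdiff_def divdiff_on_def sum.reindex[OF assms]
    by (intro sum.cong) (simp_all add: prod.reindex)
qed

lemma pos_pow_in_Mk:
  assumes "1 \<le> k" "0 \<le> a"
  shows "(\<lambda>x. a * pos_pow (x - c) (k - 1)) \<in> Mk k"
  unfolding Mk_def
proof safe
  fix xs :: "nat \<Rightarrow> real" assume inj: "inj_on xs {..k}"
  have "card (xs ` {..k}) = (k - 1) + 2" using inj assms(1) by (simp add: card_image)
  then show "0 \<le> divdiff k xs (\<lambda>x. a * pos_pow (x - c) (k - 1))"
    using assms(2) divdiff_on_pos_pow_nonneg[of "xs ` {..k}" "k - 1" c]
    by (simp add: divdiff_eq_divdiff_on[OF inj] divdiff_on_cmult)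
qed

lemma esssup_ge_on_non_null_set:
  assumes "A \<in> sets M" "emeasure M A \<noteq> 0" "\<And>x. x \<in> A \<Longrightarrow> c \<le> f x"
  shows "c \<le> esssup M f"
proof (rule ccontr)
  assume "\<not> c \<le> esssup M f"
  have "AE x in M. x \<notin> A"
    using esssup_AE[of f M]
  proof eventually_elim
    case (elim x)
    then show "x \<notin> A" using assms(3) \<open>\<not> c \<le> esssup M f\<close> by (force simp: not_le)
  qed
  then show False
    using assms(1,2) AE_iff_null_sets[of A M] by auto
qed

lemma Lnorm_nonneg: "0 \<le> Lnorm q S g"
  unfolding Lnorm_def Let_def by auto

lemma Lnorm_ge_on_subinterval:
  fixes a b u v L :: real
  assumes q: "0 < q" and uv: "u < v" "{u..v} \<subseteq> {a..b}" and L: "0 \<le> L"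
    and bound: "\<And>x. x \<in> {u..v} \<Longrightarrow> L \<le> \<bar>g x\<bar>"
  shows "ereal (L * (v - u) powr inv_exp q) \<le> Lnorm q {a..b} g"
proof -
  let ?M = "lebesgue_on {a..b}"
  have uv_sets: "{u..v} \<in> sets ?M" and uv_measure: "emeasure ?M {u..v} = ennreal (v - u)"
    using uv by (simp_all add: sets_restrict_space_iff emeasure_restrict_space)
  show ?thesis
  proof (cases "q = \<infinity>")
    case True
    have "ereal L \<le> esssup ?M (\<lambda>x. ereal \<bar>g x\<bar>)"
      using uv_sets uv_measure uv bound by (intro esssup_ge_on_non_null_set) auto
    then show ?thesis using True uv by (simp add: Lnorm_def inv_exp_def max.coboundedI2)
  next
    case False
    define r where "r = real_of_ereal q"
    have r: "0 < r" "q = ereal r" using q False unfolding r_def by (cases q; auto)+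
    define I where "I = (\<integral>\<^sup>+ x. ennreal (\<bar>g x\<bar> powr r) \<partial>?M)"
    have "ennreal (L powr r * (v - u)) = (\<integral>\<^sup>+ x. ennreal (L powr r) * indicator {u..v} x \<partial>?M)"
      using uv_sets uv_measure uv by (simp add: nn_integral_cmult_indicator ennreal_mult)
    also have "\<dots> \<le> I"
      unfolding I_def using bound L r
      by (intro nn_integral_mono) (auto simp: indicator_def intro!: ennreal_leI powr_mono2)
    finally have I: "ennreal (L powr r * (v - u)) \<le> I" .
    show ?thesis
    proof (cases "I = \<infinity>")
      case True
      then show ?thesis using r unfolding Lnorm_def I_def by (simp add: Let_def)
    next
      case False
      have "L powr r * (v - u) \<le> enn2real I"
        using enn2real_mono[OF I] False L uv by (simp add: less_top)
      then have "(L powr r * (v - u)) powr (1 / r) \<le> enn2real I powr (1 / r)"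
        using L uv r by (intro powr_mono2) auto
      moreover have "(L powr r * (v - u)) powr (1 / r) = L * (v - u) powr (1 / r)"
        using L uv r by (simp add: powr_mult powr_powr)
      ultimately show ?thesis
        using r False unfolding Lnorm_def I_def by (simp add: Let_def inv_exp_def)
    qed
  qed
qed

lemma Lnorm_le_of_nn_integral_le:
  assumes "q \<noteq> \<infinity>" "0 < q" "0 \<le> B"
    and "(\<integral>\<^sup>+ x. ennreal (\<bar>g x\<bar> powr real_of_ereal q) \<partial>lebesgue_on S) \<le> ennreal B"
  shows "Lnorm q S g \<le> ereal (B powr (1 / real_of_ereal q))"
proof -
  define I where "I = (\<integral>\<^sup>+ x. ennreal (\<bar>g x\<bar> powr real_of_ereal q) \<partial>lebesgue_on S)"
  have "0 < real_of_ereal q" using assms(1,2) by (cases q) auto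
  moreover have "I \<noteq> \<infinity>" using assms(4) unfolding I_def by (auto simp: top_unique)
  moreover have "enn2real I \<le> B" using enn2real_mono[OF assms(4)] assms(3) unfolding I_def by simp
  ultimately show ?thesis
    using assms(1) unfolding Lnorm_def I_def[symmetric] by (simp add: Let_def powr_mono2)
qed

lemma Lnorm_infinity_le:
  assumes "g \<in> borel_measurable (lebesgue_on S)" "0 \<le> B" "\<And>x. x \<in> S \<Longrightarrow> \<bar>g x\<bar> \<le> B"
  shows "Lnorm \<infinity> S g \<le> ereal B"
proof -
  have "esssup (lebesgue_on S) (\<lambda>x. ereal \<bar>g x\<bar>) \<le> ereal B"
    using assms(1,3) by (intro esssup_I borel_measurable_ereal borel_measurable_abs AE_I2) auto
  then show ?thesis using assms(2) by (simp add: Lnorm_def)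
qed

lemma has_integral_powr_distance_to_1:
  fixes e s :: real
  assumes "0 < e" "-1 < s"
  shows "((\<lambda>x. (1 - x) powr s) has_integral e powr (s + 1) / (s + 1)) {1 - e..1}"
proof -
  define F where "F x = - ((1 - x) powr (s + 1)) / (s + 1)" for x :: real
  have "(F has_vector_derivative (1 - x) powr s) (at x)" if "x \<in> {1 - e<..<1}" for x
  proof -
    have "((\<lambda>x. (1 - x) powr (s + 1)) has_real_derivative (s + 1) * (1 - x) powr s * (-1)) (at x)"
      using that by (auto intro!: derivative_eq_intros)
    then have "(F has_real_derivative - ((s + 1) * (1 - x) powr s * (-1)) / (s + 1)) (at x)"
      unfolding F_def by (intro DERIV_cdivide DERIV_minus)
    then show ?thesis
      using assms(2) by (simp add: has_real_derivative_iff_has_vector_derivative)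
  qed
  moreover have "continuous_on {1 - e..1} F"
    unfolding F_def using assms(2) by (intro continuous_intros continuous_on_powr') auto
  ultimately have "((\<lambda>x. (1 - x) powr s) has_integral F 1 - F (1 - e)) {1 - e..1}"
    using assms(1) by (intro fundamental_theorem_of_calculus_interior) auto
  moreover have "F 1 - F (1 - e) = e powr (s + 1) / (s + 1)"
    unfolding F_def using assms(2) by simp
  ultimately show ?thesis by simp
qed

lemma powr_ge_min_endpoints:
  fixes a b s r :: real
  assumes "0 < a" "a \<le> s" "s \<le> b"
  shows "min (a powr r) (b powr r) \<le> s powr r"
proof (cases "0 \<le> r")
  case True
  then show ?thesis using assms powr_mono2[of r a s] by simp
next
  case False
  then show ?thesis using assms powr_mono2'[of r s b] by simp
qed

lemma powr_le_max_endpoints: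
  fixes a b s r :: real
  assumes "0 < a" "a \<le> s" "s \<le> b"
  shows "s powr r \<le> max (a powr r) (b powr r)"
proof (cases "0 \<le> r")
  case True
  then show ?thesis using assms powr_mono2[of r s b] by simp
next
  case False
  then show ?thesis using assms powr_mono2'[of r a s] by simp
qed

text \<open>\<open>bump k \<gamma> \<epsilon> x = \<lambda> (x - 1 + \<epsilon>)\<^sub>+^(k-1)\<close> with \<open>\<lambda> = \<epsilon>^(1 - k - \<gamma>)\<close>;
  the theorem concerns \<open>\<gamma> = \<beta> + 1/p\<close>.\<close>
definition bump :: "nat \<Rightarrow> real \<Rightarrow> real \<Rightarrow> real \<Rightarrow> real" where
  "bump k \<gamma> \<epsilon> x = \<epsilon> powr (1 - real k - \<gamma>) * pos_pow (x - 1 + \<epsilon>) (k - 1)"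

lemma bump_in_Mk: "1 \<le> k \<Longrightarrow> bump k \<gamma> \<epsilon> \<in> Mk k"
  using pos_pow_in_Mk[of k "\<epsilon> powr (1 - real k - \<gamma>)" "1 - \<epsilon>"]
  unfolding bump_def by (simp add: diff_diff_eq2 diff_add_eq)

lemma bump_eq_0: "x \<le> 1 - \<epsilon> \<Longrightarrow> bump k \<gamma> \<epsilon> x = 0"
  by (simp add: bump_def pos_pow_def)

lemma wab_mult_bump:
  assumes "1 \<le> k" "0 < \<epsilon>" "1 - \<epsilon> < x" "x \<le> 1"
  shows "wab \<alpha> \<beta> x * bump k (\<beta> + \<gamma>) \<epsilon> x
    = \<epsilon> powr (- \<gamma>) * ((1 + x) powr \<alpha> * ((1 - x) / \<epsilon>) powr \<beta> * ((x - 1 + \<epsilon>) / \<epsilon>) ^ (k - 1))"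
proof -
  have "(1 - x) powr \<beta> = \<epsilon> powr \<beta> * ((1 - x) / \<epsilon>) powr \<beta>"
    using assms by (simp add: powr_mult[symmetric])
  moreover have "\<epsilon> powr (real k - 1) = \<epsilon> ^ (k - 1)"
    using assms by (simp add: powr_realpow[symmetric] of_nat_diff)
  then have "(x - 1 + \<epsilon>) ^ (k - 1) = \<epsilon> powr (real k - 1) * ((x - 1 + \<epsilon>) / \<epsilon>) ^ (k - 1)"
    using assms by (simp add: power_divide)
  moreover have "\<epsilon> powr (1 - real k - (\<beta> + \<gamma>)) * \<epsilon> powr \<beta> * \<epsilon> powr (real k - 1) = \<epsilon> powr (- \<gamma>)"
    using assms by (simp add: powr_add[symmetric])
  ultimately show ?thesis
    using assms(3) by (simp add: wab_def bump_def pos_pow_def algebra_simps)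
qed

lemma wab_mult_bump_ge:
  assumes "1 \<le> k" "0 < \<epsilon>" "\<epsilon> \<le> 1" "0 < a" "a \<le> (1 - x) / \<epsilon>" "0 < b" "b \<le> (x - 1 + \<epsilon>) / \<epsilon>"
  shows "min 1 (2 powr \<alpha>) * min (a powr \<beta>) 1 * b ^ (k - 1) * \<epsilon> powr (- \<gamma>)
    \<le> \<bar>wab \<alpha> \<beta> x * bump k (\<beta> + \<gamma>) \<epsilon> x\<bar>"
proof -
  have "a * \<epsilon> \<le> 1 - x" "b * \<epsilon> \<le> x - 1 + \<epsilon>" "0 < a * \<epsilon>" "0 < b * \<epsilon>"
    using assms by (simp_all add: le_divide_eq)
  then have x: "1 - \<epsilon> < x" "x \<le> 1" "0 \<le> x"
    using assms(3) by linarith+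
  define P where "P = (1 + x) powr \<alpha> * ((1 - x) / \<epsilon>) powr \<beta> * ((x - 1 + \<epsilon>) / \<epsilon>) ^ (k - 1)"
  have "min 1 (2 powr \<alpha>) \<le> (1 + x) powr \<alpha>"
    using powr_ge_min_endpoints[of 1 "1 + x" 2 \<alpha>] x by simp
  moreover have "min (a powr \<beta>) 1 \<le> ((1 - x) / \<epsilon>) powr \<beta>"
    using powr_ge_min_endpoints[of a "(1 - x) / \<epsilon>" 1 \<beta>] x assms by (simp add: divide_le_eq)
  moreover have "b ^ (k - 1) \<le> ((x - 1 + \<epsilon>) / \<epsilon>) ^ (k - 1)"
    using assms by (simp add: power_mono)
  ultimately have "min 1 (2 powr \<alpha>) * min (a powr \<beta>) 1 * b ^ (k - 1) \<le> P"
    unfolding P_def using assms(6) by (intro mult_mono) auto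
  then have "min 1 (2 powr \<alpha>) * min (a powr \<beta>) 1 * b ^ (k - 1) * \<epsilon> powr (- \<gamma>) \<le> \<epsilon> powr (- \<gamma>) * P"
    by (subst mult.commute) (rule mult_left_mono, simp_all)
  also have "\<dots> = \<bar>wab \<alpha> \<beta> x * bump k (\<beta> + \<gamma>) \<epsilon> x\<bar>"
    using wab_mult_bump[OF assms(1,2) x(1,2), of \<alpha> \<beta> \<gamma>] x(1) assms(2)
    unfolding P_def by simp
  finally show ?thesis .
qed

lemma wab_mult_bump_le:
  assumes "1 \<le> k" "0 < \<epsilon>" "\<epsilon> \<le> 1" "1 - \<epsilon> < x" "x \<le> 1"
  shows "\<bar>wab \<alpha> \<beta> x * bump k (\<beta> + \<gamma>) \<epsilon> x\<bar> \<le> max 1 (2 powr \<alpha>) * \<epsilon> powr (- \<gamma> - \<beta>) * (1 - x) powr \<beta>"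
proof -
  define P where "P = (1 + x) powr \<alpha> * ((1 - x) / \<epsilon>) powr \<beta> * ((x - 1 + \<epsilon>) / \<epsilon>) ^ (k - 1)"
  have "(1 + x) powr \<alpha> \<le> max 1 (2 powr \<alpha>)"
    using powr_le_max_endpoints[of 1 "1 + x" 2 \<alpha>] assms by simp
  moreover have "((x - 1 + \<epsilon>) / \<epsilon>) ^ (k - 1) \<le> 1"
    using assms by (intro power_le_one) auto
  ultimately have "P \<le> max 1 (2 powr \<alpha>) * ((1 - x) / \<epsilon>) powr \<beta> * 1"
    unfolding P_def using assms by (intro mult_mono) auto
  have "\<bar>wab \<alpha> \<beta> x * bump k (\<beta> + \<gamma>) \<epsilon> x\<bar> = \<epsilon> powr (- \<gamma>) * P"
    using wab_mult_bump[OF assms(1,2,4,5), of \<alpha> \<beta> \<gamma>] assms unfolding P_def by simp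
  also have "\<dots> \<le> \<epsilon> powr (- \<gamma>) * (max 1 (2 powr \<alpha>) * ((1 - x) / \<epsilon>) powr \<beta> * 1)"
    using \<open>P \<le> _\<close> by (rule mult_left_mono) simp
  also have "\<dots> = max 1 (2 powr \<alpha>) * \<epsilon> powr (- \<gamma> - \<beta>) * (1 - x) powr \<beta>"
    using assms by (simp add: powr_divide powr_diff)
  finally show ?thesis .
qed

lemma Lnorm_wab_bump_lower_bound:
  assumes "1 \<le> k" "0 < p"
  shows "\<exists>C>0. \<forall>\<epsilon>. 0 < \<epsilon> \<and> \<epsilon> \<le> 1 \<longrightarrow>
           ereal C \<le> Lnorm p {-1..1} (\<lambda>x. wab \<alpha> \<beta> x * bump k (\<beta> + inv_exp p) \<epsilon> x)"
proof (intro exI conjI allI impI)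
  define C' where "C' = min 1 (2 powr \<alpha>) * min ((1/4) powr \<beta>) 1 * (1/2) ^ (k - 1)"
  have C': "0 < C'" unfolding C'_def by simp
  show "0 < C' * (1/4) powr inv_exp p" using C' by simp
  fix \<epsilon> :: real assume "0 < \<epsilon> \<and> \<epsilon> \<le> 1"
  then have \<epsilon>: "0 < \<epsilon>" "\<epsilon> \<le> 1" by simp_all
  have "C' * \<epsilon> powr (- inv_exp p) \<le> \<bar>wab \<alpha> \<beta> x * bump k (\<beta> + inv_exp p) \<epsilon> x\<bar>"
    if "x \<in> {1 - \<epsilon>/2 .. 1 - \<epsilon>/4}" for x
    unfolding C'_def using that \<epsilon> by (intro wab_mult_bump_ge[OF assms(1)]) (auto simp: field_simps)
  then have "ereal (C' * \<epsilon> powr (- inv_exp p) * ((1 - \<epsilon>/4) - (1 - \<epsilon>/2)) powr inv_exp p)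
      \<le> Lnorm p {-1..1} (\<lambda>x. wab \<alpha> \<beta> x * bump k (\<beta> + inv_exp p) \<epsilon> x)"
    using \<epsilon> C' by (intro Lnorm_ge_on_subinterval[OF assms(2)]) auto
  moreover have "C' * \<epsilon> powr (- inv_exp p) * ((1 - \<epsilon>/4) - (1 - \<epsilon>/2)) powr inv_exp p
      = C' * (1/4) powr inv_exp p"
    using \<epsilon> by (simp add: powr_divide powr_minus field_simps)
  ultimately show "ereal (C' * (1/4) powr inv_exp p)
      \<le> Lnorm p {-1..1} (\<lambda>x. wab \<alpha> \<beta> x * bump k (\<beta> + inv_exp p) \<epsilon> x)"
    by metis
qed

lemma nn_integral_wab_bump_le:
  assumes "1 \<le> k" "0 < r" "-1 < \<beta> * r" "0 < \<epsilon>" "\<epsilon> \<le> 1"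
  shows "(\<integral>\<^sup>+ x. ennreal (\<bar>wab \<alpha> \<beta> x * bump k (\<beta> + 1 / r) \<epsilon> x\<bar> powr r) \<partial>lebesgue_on {-1..1})
    \<le> ennreal (max 1 (2 powr \<alpha>) powr r / (\<beta> * r + 1))"
proof -
  define M where "M = max 1 (2 powr \<alpha>)"
  define K where "K = M powr r * \<epsilon> powr (- 1 - \<beta> * r)"
  let ?g = "\<lambda>x. wab \<alpha> \<beta> x * bump k (\<beta> + 1 / r) \<epsilon> x"
  have pointwise: "ennreal (\<bar>?g x\<bar> powr r) * indicator {-1..1} x
      \<le> ennreal (K * (1 - x) powr (\<beta> * r)) * indicator {1 - \<epsilon>..1} x" for x
  proof (cases "1 - \<epsilon> < x \<and> x \<le> 1")
    case True
    have "\<bar>?g x\<bar> powr r \<le> (M * \<epsilon> powr (- (1 / r) - \<beta>) * (1 - x) powr \<beta>) powr r"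
      using wab_mult_bump_le[OF assms(1,4,5), of x \<alpha> \<beta> "1 / r"] True assms(2)
      unfolding M_def by (intro powr_mono2) auto
    also have "\<dots> = M powr r * \<epsilon> powr ((- (1 / r) - \<beta>) * r) * (1 - x) powr (\<beta> * r)"
      using True unfolding M_def by (simp add: powr_mult powr_powr mult.commute)
    also have "(- (1 / r) - \<beta>) * r = - 1 - \<beta> * r"
      using assms(2) by (simp add: field_simps)
    finally have "\<bar>?g x\<bar> powr r \<le> K * (1 - x) powr (\<beta> * r)"
      unfolding K_def .
    then show ?thesis using True assms(5) by (auto simp: indicator_def intro: ennreal_leI)
  next
    case False
    then show ?thesis by (auto simp: bump_eq_0 indicator_def)
  qed
  have "(\<integral>\<^sup>+ x. ennreal (\<bar>?g x\<bar> powr r) \<partial>lebesgue_on {-1..1})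
      = (\<integral>\<^sup>+ x. ennreal (\<bar>?g x\<bar> powr r) * indicator {-1..1} x \<partial>lebesgue)"
    by (rule nn_integral_restrict_space) simp
  also have "\<dots> \<le> (\<integral>\<^sup>+ x. ennreal (K * (1 - x) powr (\<beta> * r)) * indicator {1 - \<epsilon>..1} x \<partial>lebesgue)"
    by (intro nn_integral_mono pointwise)
  also have "\<dots> = ennreal (K * (\<epsilon> powr (\<beta> * r + 1) / (\<beta> * r + 1)))"
    unfolding nn_integral_completion using assms(3,4) K_def
    by (intro nn_integral_has_integral_lebesgue' has_integral_mult_right has_integral_powr_distance_to_1)
       auto
  also have "K * (\<epsilon> powr (\<beta> * r + 1) / (\<beta> * r + 1)) = M powr r / (\<beta> * r + 1)"
    unfolding K_def using assms(4) by (simp add: powr_add[symmetric])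
  finally show ?thesis unfolding M_def .
qed

lemma Lnorm_wab_bump_upper_bound:
  assumes "1 \<le> k" "0 < p" "\<beta> \<in> J p"
  shows "\<exists>C>0. \<forall>\<epsilon>. 0 < \<epsilon> \<and> \<epsilon> \<le> 1 \<longrightarrow>
           Lnorm p {-1..1} (\<lambda>x. wab \<alpha> \<beta> x * bump k (\<beta> + inv_exp p) \<epsilon> x) \<le> ereal C"
proof (cases "p = \<infinity>")
  case True
  then have \<beta>: "0 \<le> \<beta>" and ip: "inv_exp p = 0"
    using assms(3) by (simp_all add: J_def inv_exp_def)
  show ?thesis
  proof (intro exI conjI allI impI)
    show "0 < max 1 (2 powr \<alpha>)" by simp
    fix \<epsilon> :: real assume "0 < \<epsilon> \<and> \<epsilon> \<le> 1"
    then have \<epsilon>: "0 < \<epsilon>" "\<epsilon> \<le> 1" by simp_all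
    let ?g = "\<lambda>x. wab \<alpha> \<beta> x * bump k (\<beta> + inv_exp p) \<epsilon> x"
    have "?g \<in> borel_measurable borel"
      unfolding wab_def bump_def pos_pow_def by measurable
    then have "?g \<in> borel_measurable (lebesgue_on {-1..1})"
      by (intro measurable_restrict_space1 measurable_completion) simp
    moreover have "\<bar>?g x\<bar> \<le> max 1 (2 powr \<alpha>)" if "x \<in> {-1..1}" for x
    proof (cases "1 - \<epsilon> < x")
      case True
      have "\<bar>?g x\<bar> \<le> max 1 (2 powr \<alpha>) * \<epsilon> powr (- 0 - \<beta>) * (1 - x) powr \<beta>"
        using wab_mult_bump_le[OF assms(1) \<epsilon> True, of \<alpha> \<beta> 0] that ip by simp
      also have "\<dots> \<le> max 1 (2 powr \<alpha>) * \<epsilon> powr (- 0 - \<beta>) * \<epsilon> powr \<beta>"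
        using True that \<beta> by (intro mult_left_mono powr_mono2) auto
      also have "\<dots> = max 1 (2 powr \<alpha>)"
        using \<epsilon> by (simp add: powr_add[symmetric])
      finally show ?thesis .
    qed (simp add: bump_eq_0)
    ultimately show "Lnorm p {-1..1} ?g \<le> ereal (max 1 (2 powr \<alpha>))"
      unfolding True by (intro Lnorm_infinity_le) auto
  qed
next
  case False
  define r where "r = real_of_ereal p"
  have r: "0 < r" "p = ereal r" "inv_exp p = 1 / r"
    using assms(2) False unfolding r_def inv_exp_def by (cases p; auto)+
  have "- (1 / r) < \<beta>" using assms(3) False r by (simp add: J_def)
  then have \<beta>r: "-1 < \<beta> * r" using r(1) by (simp add: field_simps)
  define B where "B = max 1 (2 powr \<alpha>) powr r / (\<beta> * r + 1)"
  have B: "0 < B" unfolding B_def using \<beta>r by simp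
  show ?thesis
  proof (intro exI conjI allI impI)
    show "0 < B powr (1 / r)" using B by simp
    fix \<epsilon> :: real assume "0 < \<epsilon> \<and> \<epsilon> \<le> 1"
    then have "(\<integral>\<^sup>+ x. ennreal (\<bar>wab \<alpha> \<beta> x * bump k (\<beta> + inv_exp p) \<epsilon> x\<bar> powr real_of_ereal p)
        \<partial>lebesgue_on {-1..1}) \<le> ennreal B"
      unfolding r(3) B_def r_def[symmetric] using nn_integral_wab_bump_le[OF assms(1) r(1) \<beta>r] by simp
    then show "Lnorm p {-1..1} (\<lambda>x. wab \<alpha> \<beta> x * bump k (\<beta> + inv_exp p) \<epsilon> x) \<le> ereal (B powr (1 / r))"
      unfolding r_def using Lnorm_le_of_nn_integral_le[OF False assms(2)] B by simp
  qed
qed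

lemma Delta_bwd_eq_if_vanishes_left:
  assumes "0 < h" "a < x" "x \<le> a + h" "-1 \<le> x - k * h" "x \<le> 1"
    and vanishes: "\<And>y. y \<le> a \<Longrightarrow> F y = 0"
  shows "Delta_bwd k h F x = F x"
proof -
  have "0 \<le> real k * h" using assms(1) by simp
  then have "x - k * h / 2 - k * h / 2 \<in> {-1..1} \<and> x - k * h / 2 + k * h / 2 \<in> {-1..1}"
    using assms(4,5) by (simp add: mult.commute[of h])
  then have "Delta_bwd k h F x = (\<Sum>i\<le>k. real (k choose i) * (-1) ^ (k - i) * F (x - k * h + i * h))"
    unfolding Delta_bwd_def Delta_def by (simp add: algebra_simps)
  also have "\<dots> = (\<Sum>i<k. real (k choose i) * (-1) ^ (k - i) * F (x - k * h + i * h)) + F x"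
    by (simp add: lessThan_Suc_atMost[symmetric])
  also have "(\<Sum>i<k. real (k choose i) * (-1) ^ (k - i) * F (x - k * h + i * h)) = 0"
  proof (intro sum.neutral ballI)
    fix i assume "i \<in> {..<k}"
    then have "real i * h + h \<le> real k * h"
      using assms(1) mult_right_mono[of "real i + 1" "real k" h] by (simp add: distrib_right)
    then show "real (k choose i) * (-1) ^ (k - i) * F (x - k * h + i * h) = 0"
      using assms(3) by (simp add: vanishes)
  qed
  finally show ?thesis by simp
qed

lemma Omega_right_le_omega_phi:
  assumes "1 \<le> k" "0 < \<delta>"
  shows "Omega_right k f \<delta> w q \<le> omega_phi k f \<delta> w q"
proof -
  have "0 \<le> Omega_main k f \<delta> w q"
    unfolding Omega_main_def using assms(2) by (intro SUP_upper2[of \<delta>]) (auto simp: Lnorm_nonneg)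
  moreover have "0 \<le> Omega_left k f \<delta> w q"
    unfolding Omega_left_def using assms
    by (intro SUP_upper2[of "2 * (real k)\<^sup>2 * \<delta>\<^sup>2"]) (auto simp: Lnorm_nonneg)
  ultimately show ?thesis
    unfolding omega_phi_def by (metis add_mono add.left_neutral order_refl)
qed

lemma omega_phi_wab_bump_lower_bound:
  assumes "1 \<le> k" "0 < q"
  shows "\<exists>c>0. \<forall>\<delta> \<epsilon>. 0 < \<delta> \<and> 0 < \<epsilon> \<and> \<epsilon> \<le> min (2 * (real k)\<^sup>2 * \<delta>\<^sup>2) 1 \<longrightarrow>
           ereal (c * \<epsilon> powr (inv_exp q - \<gamma>)) \<le> omega_phi k (bump k (\<beta> + \<gamma>) \<epsilon>) \<delta> (wab \<alpha> \<beta>) q"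
proof (intro exI conjI allI impI)
  define c' where "c' = min 1 (2 powr \<alpha>) * min ((1/2) powr \<beta>) 1 * (1 / (4 * real k)) ^ (k - 1)"
  have c': "0 < c'" unfolding c'_def using assms(1) by simp
  show "0 < c' * (1 / (4 * real k)) powr inv_exp q" using c' assms(1) by simp
  fix \<delta> \<epsilon> :: real assume "0 < \<delta> \<and> 0 < \<epsilon> \<and> \<epsilon> \<le> min (2 * (real k)\<^sup>2 * \<delta>\<^sup>2) 1"
  then have \<delta>: "0 < \<delta>" and \<epsilon>: "0 < \<epsilon>" "\<epsilon> \<le> 1" "\<epsilon> \<le> 2 * (real k)\<^sup>2 * \<delta>\<^sup>2" by simp_all
  let ?f = "bump k (\<beta> + \<gamma>) \<epsilon>"
  define h where "h = \<epsilon> / (2 * real k)"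
  have h: "0 < h" "h \<le> \<epsilon> / 2" "real k * h = \<epsilon> / 2"
    unfolding h_def using \<epsilon> assms(1) by (auto simp: field_simps)
  have "c' * \<epsilon> powr (- \<gamma>) \<le> \<bar>wab \<alpha> \<beta> x * Delta_bwd k h ?f x\<bar>"
    if x: "x \<in> {1 - \<epsilon> + h/2 .. 1 - \<epsilon> + h}" for x
  proof -
    have "Delta_bwd k h ?f x = ?f x"
      using x h \<epsilon> by (intro Delta_bwd_eq_if_vanishes_left[of h "1 - \<epsilon>"]) (auto simp: bump_eq_0)
    moreover have "1 / 2 \<le> (1 - x) / \<epsilon>"
      using x h \<epsilon> by (simp add: le_divide_eq)
    moreover have "1 / (4 * real k) \<le> (x - 1 + \<epsilon>) / \<epsilon>"
      using x \<epsilon> assms(1) unfolding h_def by (simp add: le_divide_eq field_simps)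
    ultimately show ?thesis
      unfolding c'_def using assms(1) wab_mult_bump_ge[OF assms(1) \<epsilon>(1,2), of "1/2" x "1 / (4 * real k)"]
      by simp
  qed
  then have "ereal (c' * \<epsilon> powr (- \<gamma>) * ((1 - \<epsilon> + h) - (1 - \<epsilon> + h/2)) powr inv_exp q)
      \<le> Lnorm q {1 - 2 * (real k)\<^sup>2 * \<delta>\<^sup>2 .. 1} (\<lambda>x. wab \<alpha> \<beta> x * Delta_bwd k h ?f x)"
    using \<epsilon> c' h by (intro Lnorm_ge_on_subinterval[OF assms(2)]) auto
  also have "\<dots> \<le> Omega_right k ?f \<delta> (wab \<alpha> \<beta>) q"
    unfolding Omega_right_def using h \<epsilon> by (intro SUP_upper) auto
  also have "\<dots> \<le> omega_phi k ?f \<delta> (wab \<alpha> \<beta>) q"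
    by (rule Omega_right_le_omega_phi[OF assms(1) \<delta>])
  also have "c' * \<epsilon> powr (- \<gamma>) * ((1 - \<epsilon> + h) - (1 - \<epsilon> + h/2)) powr inv_exp q
      = c' * (1 / (4 * real k)) powr inv_exp q * \<epsilon> powr (inv_exp q - \<gamma>)"
    using \<epsilon> assms(1) unfolding h_def by (simp add: powr_divide powr_diff powr_minus field_simps)
  finally show "ereal (c' * (1 / (4 * real k)) powr inv_exp q * \<epsilon> powr (inv_exp q - \<gamma>))
      \<le> omega_phi k ?f \<delta> (wab \<alpha> \<beta>) q" .
qed

theorem lemma6p4:
  fixes k :: nat and p q :: ereal and \<alpha> \<beta> :: real
  assumes "k \<ge> 1" and "0 < p" and "0 < q" and "\<beta> \<in> J p"
  shows "\<exists>c>0. \<exists>C1>0. \<exists>C2>0. \<forall>(\<delta>::real) (\<epsilon>::real).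
           0 < \<delta> \<and> 0 < \<epsilon> \<and> \<epsilon> \<le> min (2 * (real k)\<^sup>2 * \<delta>\<^sup>2) 1 \<longrightarrow>
           (let lam = \<epsilon> powr (- real k - \<beta> - inv_exp p + 1);
                f = (\<lambda>x. lam * pos_pow (x - 1 + \<epsilon>) (k - 1))
            in f \<in> Mk k
               \<and> ereal C1 \<le> Lnorm p {-1..1} (\<lambda>x. wab \<alpha> \<beta> x * f x)
               \<and> Lnorm p {-1..1} (\<lambda>x. wab \<alpha> \<beta> x * f x) \<le> ereal C2
               \<and> omega_phi k f \<delta> (wab \<alpha> \<beta>) q \<ge> ereal (c * \<epsilon> powr (inv_exp q - inv_exp p)))"
proof -
  obtain C1 where "0 < C1" and lower: "\<forall>\<epsilon>. 0 < \<epsilon> \<and> \<epsilon> \<le> 1 \<longrightarrow>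
      ereal C1 \<le> Lnorm p {-1..1} (\<lambda>x. wab \<alpha> \<beta> x * bump k (\<beta> + inv_exp p) \<epsilon> x)"
    using Lnorm_wab_bump_lower_bound[OF assms(1,2)] by blast
  obtain C2 where "0 < C2" and upper: "\<forall>\<epsilon>. 0 < \<epsilon> \<and> \<epsilon> \<le> 1 \<longrightarrow>
      Lnorm p {-1..1} (\<lambda>x. wab \<alpha> \<beta> x * bump k (\<beta> + inv_exp p) \<epsilon> x) \<le> ereal C2"
    using Lnorm_wab_bump_upper_bound[OF assms(1,2,4)] by blast
  obtain c where "0 < c" and omega: "\<forall>\<delta> \<epsilon>. 0 < \<delta> \<and> 0 < \<epsilon> \<and> \<epsilon> \<le> min (2 * (real k)\<^sup>2 * \<delta>\<^sup>2) 1 \<longrightarrow>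
      ereal (c * \<epsilon> powr (inv_exp q - inv_exp p))
        \<le> omega_phi k (bump k (\<beta> + inv_exp p) \<epsilon>) \<delta> (wab \<alpha> \<beta>) q"
    using omega_phi_wab_bump_lower_bound[OF assms(1,3)] by blast
  have bump: "\<epsilon> powr (- real k - \<beta> - inv_exp p + 1) * pos_pow (x - 1 + \<epsilon>) (k - 1)
      = bump k (\<beta> + inv_exp p) \<epsilon> x" for \<epsilon> x
    by (simp add: bump_def algebra_simps)
  show ?thesis
    unfolding Let_def bump
    using \<open>0 < c\<close> \<open>0 < C1\<close> \<open>0 < C2\<close> lower upper omega bump_in_Mk[OF assms(1)]
    by (intro exI[of _ c] exI[of _ C1] exI[of _ C2] conjI allI impI) auto
qed

end
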